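(* If $\Xi$ is an extremal point of $\mathcal C$, then $\operatorname{rank}(\Xi)^2\le\sum_{k\in S}m_k^2$.
   Context: Let $G$ be a group with a unitary representation $g\mapsto U_g$ on a finite-dimensional Hilbert space $\mathcal H$, decomposed as $\mathcal H=\bigoplus_{k\in S}(\mathcal H_k\otimes\mathbb C^{m_k})$, where $S$ is the set of equivalence classes of irreducible components, $\mathcal H_k$ carries the irreducible representation of class $k$ and $m_k$ is its multiplicity. Let $d_{\mathcal H_k}=\dim\mathcal H_k$, let $P_k$ be the orthogonal projector onto $\mathcal H_k\otimes\mathbb C^{m_k}$, and let $\operatorname{Tr}_{\mathcal H_k}$ be the partial trace $\mathcal B(\mathcal H_k\otimes\mathbb C^{m_k})\to\mathcal B(\mathbb C^{m_k})$. Let $\mathcal C$ be the convex set of operators $\Xi\ge0$ on $\mathcal H$ with $\operatorname{Tr}_{\mathcal H_k}(P_k\Xi P_k)=d_{\mathcal H_k}I_{m_k}$ for all $k\in S$. *)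

theory Defs
  imports "Jordan_Normal_Form.Schur_Decomposition" "Jordan_Normal_Form.DL_Rank"
begin

text \<open>Block data of the isotypic decomposition H = (+)_{k<s} (H_k (x) C^{m_k}),
  with dim H_k = d k.  The Hilbert space is C^N, N = sum_k d k * m k, and the
  basis vector e_i (x) f_j (i < d k, j < m k) of the k-th summand has index
  blk_off d m k + i * m k + j (blocks in order of k, Kronecker ordering inside).\<close>

definition blk_off :: "(nat \<Rightarrow> nat) \<Rightarrow> (nat \<Rightarrow> nat) \<Rightarrow> nat \<Rightarrow> nat" where
  "blk_off d m k = (\<Sum>l<k. d l * m l)"

definition tot_dim :: "nat \<Rightarrow> (nat \<Rightarrow> nat) \<Rightarrow> (nat \<Rightarrow> nat) \<Rightarrow> nat" where
  "tot_dim s d m = (\<Sum>k<s. d k * m k)"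

definition psd_mat :: "nat \<Rightarrow> complex mat \<Rightarrow> bool" where
  "psd_mat n A \<longleftrightarrow> A \<in> carrier_mat n n \<and> mat_adjoint A = A \<and>
     (\<forall>v \<in> carrier_vec n. Im (conjugate v \<bullet> (A *\<^sub>v v)) = 0 \<and> Re (conjugate v \<bullet> (A *\<^sub>v v)) \<ge> 0)"

definition ptrace_blk :: "(nat \<Rightarrow> nat) \<Rightarrow> (nat \<Rightarrow> nat) \<Rightarrow> nat \<Rightarrow> complex mat \<Rightarrow> complex mat" where
  "ptrace_blk d m k A = mat (m k) (m k) (\<lambda>(j, j').
      \<Sum>i<d k. A $$ (blk_off d m k + i * m k + j, blk_off d m k + i * m k + j'))"

definition setC :: "nat \<Rightarrow> (nat \<Rightarrow> nat) \<Rightarrow> (nat \<Rightarrow> nat) \<Rightarrow> complex mat set" where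
  "setC s d m = {X. psd_mat (tot_dim s d m) X \<and>
      (\<forall>k<s. ptrace_blk d m k X = of_nat (d k) \<cdot>\<^sub>m 1\<^sub>m (m k))}"

definition extreme_point_mat :: "complex mat \<Rightarrow> complex mat set \<Rightarrow> bool" where
  "extreme_point_mat X K \<longleftrightarrow> X \<in> K \<and>
     (\<forall>A\<in>K. \<forall>B\<in>K. \<forall>t::real. 0 < t \<and> t < 1 \<and>
        X = complex_of_real t \<cdot>\<^sub>m A + complex_of_real (1 - t) \<cdot>\<^sub>m B \<longrightarrow> A = B)"

end

theory Submission
  imports Defs
begin

text \<open>Let B index rank X linearly independent columns of X and put r = card B. For a Hermitian
  r x r matrix F the perturbation D = X_B F X_B^* has its range inside that of X, so X + t D stays
  positive semidefinite for all small real t, and D = 0 only if F = 0. The conditions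
  Tr_{H_k}(P_k D P_k) = 0 are sum_k m_k^2 complex linear equations in the r^2 entries of F, and
  their solution space is closed under F \<mapsto> F^*. If r^2 > sum_k m_k^2 there is therefore a nonzero
  Hermitian solution, and X = (X + t D)/2 + (X - t D)/2 contradicts extremality.\<close>

lemma dim_mat_adjoint [simp]:
  "dim_row (mat_adjoint A) = dim_col A" "dim_col (mat_adjoint A) = dim_row A"
  unfolding mat_adjoint_def by (simp_all add: mat_of_rows_def)

lemma index_mat_adjoint [simp]:
  "i < dim_col A \<Longrightarrow> j < dim_row A \<Longrightarrow> mat_adjoint A $$ (i, j) = cnj (A $$ (j, i))"
  unfolding mat_adjoint_def by (simp add: mat_of_rows_def)

lemma mat_adjoint_eq_iff:
  assumes A: "A \<in> carrier_mat n n"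
  shows "mat_adjoint A = A \<longleftrightarrow> (\<forall>i<n. \<forall>j<n. A $$ (i, j) = cnj (A $$ (j, i)))"
proof
  assume "mat_adjoint A = A"
  then show "\<forall>i<n. \<forall>j<n. A $$ (i, j) = cnj (A $$ (j, i))"
    using A by (metis carrier_matD index_mat_adjoint)
next
  assume herm: "\<forall>i<n. \<forall>j<n. A $$ (i, j) = cnj (A $$ (j, i))"
  show "mat_adjoint A = A"
  proof (rule eq_matI)
    fix i j assume "i < dim_row A" "j < dim_col A"
    then show "mat_adjoint A $$ (i, j) = A $$ (i, j)"
      using A herm by (metis carrier_matD index_mat_adjoint)
  qed (use A in auto)
qed

lemma exists_nonzero_mat_kernel:
  fixes A :: "'a::field mat"
  assumes A: "A \<in> carrier_mat nr nc" and less: "nr < nc"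
  shows "\<exists>v\<in>carrier_vec nc. v \<noteq> 0\<^sub>v nc \<and> A *\<^sub>v v = 0\<^sub>v nr"
proof (cases "distinct (cols A)")
  case True
  interpret vec_space "TYPE('a)" nr .
  have cols: "set (cols A) \<subseteq> carrier_vec nr" using A cols_dim by blast
  have card: "card (set (cols A)) = nc" using True A distinct_card by fastforce
  have "lin_dep (set (cols A))"
  proof (rule ccontr)
    assume "lin_indpt (set (cols A))"
    from li_le_dim(2)[OF _ cols this] have "card (set (cols A)) \<le> nr"
      using dim_is_n fin_dim by simp
    then show False using card less by simp
  qed
  from lin_depE[OF A this True] show ?thesis by blast
next
  case False
  then obtain i j where "i < length (cols A)" "j < length (cols A)" "i \<noteq> j" "cols A ! i = cols A ! j"
    by (metis distinct_conv_nth)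
  then have ij: "i < nc" "j < nc" "i \<noteq> j" "col A i = col A j" using A by auto
  define v :: "'a vec" where "v = unit_vec nc i - unit_vec nc j"
  have v: "v \<in> carrier_vec nc" unfolding v_def by simp
  have "v $ i \<noteq> 0" unfolding v_def using ij by simp
  then have "v \<noteq> 0\<^sub>v nc" using ij by auto
  moreover have "A *\<^sub>v v = 0\<^sub>v nr"
  proof -
    have "A *\<^sub>v unit_vec nc k = col A k" if "k < nc" for k
      using A that by (intro eq_vecI) (auto simp: row_def col_def)
    then show ?thesis
      unfolding v_def using A ij by (simp add: mult_minus_distrib_mat_vec)
  qed
  ultimately show ?thesis using v by blast
qed

lemma underdetermined_system_nonzero_solution:
  fixes c :: "'e \<Rightarrow> 'q \<Rightarrow> 'a::field"
  assumes E: "finite E" and Q: "finite Q" and less: "card E < card Q"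
  shows "\<exists>x. (\<exists>q\<in>Q. x q \<noteq> 0) \<and> (\<forall>e\<in>E. (\<Sum>q\<in>Q. c e q * x q) = 0)"
proof -
  obtain g where g: "bij_betw g {0..<card E} E" using ex_bij_betw_nat_finite[OF E] by blast
  obtain h where h: "bij_betw h {0..<card Q} Q" using ex_bij_betw_nat_finite[OF Q] by blast
  define A where "A = mat (card E) (card Q) (\<lambda>(p, j). c (g p) (h j))"
  have A: "A \<in> carrier_mat (card E) (card Q)" unfolding A_def by simp
  from exists_nonzero_mat_kernel[OF A less] obtain v where v: "v \<in> carrier_vec (card Q)"
    "v \<noteq> 0\<^sub>v (card Q)" "A *\<^sub>v v = 0\<^sub>v (card E)" by blast
  define x where "x q = v $ (inv_into {0..<card Q} h q)" for q
  have xh: "x (h j) = v $ j" if "j < card Q" for j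
    unfolding x_def using h that by (simp add: bij_betw_inv_into_left)
  have "\<exists>q\<in>Q. x q \<noteq> 0"
  proof -
    obtain j where j: "j < card Q" "v $ j \<noteq> 0" using v
      by (metis carrier_vecD eq_vecI index_zero_vec(1) index_zero_vec(2))
    then show ?thesis using xh[OF j(1)] h by (metis atLeastLessThan_iff bij_betwE zero_le)
  qed
  moreover have "(\<Sum>q\<in>Q. c e q * x q) = 0" if e: "e \<in> E" for e
  proof -
    obtain p where p: "p < card E" "g p = e" using g e
      by (metis atLeastLessThan_iff bij_betw_iff_bijections)
    have "(\<Sum>q\<in>Q. c e q * x q) = (\<Sum>j\<in>{0..<card Q}. c e (h j) * x (h j))"
      using h sum.reindex[of h "{0..<card Q}" "\<lambda>q. c e q * x q"] by (simp add: bij_betw_def)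
    also have "\<dots> = (\<Sum>j\<in>{0..<card Q}. c e (h j) * v $ j)"
      using xh by (intro sum.cong) auto
    also have "\<dots> = (A *\<^sub>v v) $ p"
      using p v(1) unfolding A_def by (auto simp: mult_mat_vec_def scalar_prod_def intro!: sum.cong)
    also have "\<dots> = 0" using v(3) p by simp
    finally show ?thesis .
  qed
  ultimately show ?thesis by blast
qed

definition lin_indpt_cols :: "nat \<Rightarrow> 'a::field mat \<Rightarrow> nat set \<Rightarrow> bool" where
  "lin_indpt_cols n X B \<longleftrightarrow>
     (\<forall>l. (\<forall>i<n. (\<Sum>a\<in>B. l a * X $$ (i, a)) = 0) \<longrightarrow> (\<forall>a\<in>B. l a = 0))"

lemma exists_lin_indpt_cols_card_rank:
  fixes X :: "'a::field mat"
  assumes X: "X \<in> carrier_mat n nc"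
  shows "\<exists>B \<subseteq> {..<nc}. card B = vec_space.rank n X \<and> lin_indpt_cols n X B"
proof -
  interpret vec_space "TYPE('a)" n .
  obtain S where S: "maximal S (\<lambda>T. T \<subseteq> set (cols X) \<and> lin_indpt T)"
    using maximal_exists[of "\<lambda>T. T \<subseteq> set (cols X) \<and> lin_indpt T" "card (set (cols X))" "{}"]
    by (meson List.finite_set card_mono empty_iff empty_subsetI finite_lin_indpt2 rev_finite_subset)
  have rank: "rank X = card S" by (rule rank_card_indpt[OF X S])
  have S_cols: "S \<subseteq> set (cols X)" and S_indpt: "lin_indpt S" using S unfolding maximal_def by auto
  have S_fin: "finite S" using S_cols finite_subset by blast
  have S_carrier: "S \<subseteq> carrier_vec n" using S_cols X cols_dim by blast
  have col_index: "\<exists>a. a < nc \<and> col X a = u" if "u \<in> S" for u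
    using S_cols that X by (metis carrier_matD(2) cols_length cols_nth in_set_conv_nth subsetD)
  define g where "g u = (SOME a. a < nc \<and> col X a = u)" for u
  have g: "g u < nc \<and> col X (g u) = u" if "u \<in> S" for u
    unfolding g_def using someI_ex[OF col_index[OF that]] .
  have inj: "inj_on g S" by (metis g inj_onI)
  have "lin_indpt_cols n X (g ` S)"
    unfolding lin_indpt_cols_def
  proof (intro allI impI)
    fix l assume comb: "\<forall>i<n. (\<Sum>a\<in>g ` S. l a * X $$ (i, a)) = 0"
    have "lincomb (l \<circ> g) S = 0\<^sub>v n"
    proof (rule eq_vecI)
      show "dim_vec (lincomb (l \<circ> g) S) = dim_vec (0\<^sub>v n)"
        using lincomb_closed[OF S_carrier] by (simp add: Pi_def)
      fix i assume "i < dim_vec (0\<^sub>v n)"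
      then have i: "i < n" by simp
      have "lincomb (l \<circ> g) S $ i = (\<Sum>u\<in>S. l (g u) * u $ i)"
        by (simp add: lincomb_index[OF i S_carrier])
      also have "\<dots> = (\<Sum>u\<in>S. l (g u) * X $$ (i, g u))"
        using g i X by (intro sum.cong) (auto, metis index_col carrier_matD)
      also have "\<dots> = 0"
        using comb i sum.reindex[OF inj, of "\<lambda>a. l a * X $$ (i, a)"] by simp
      finally show "lincomb (l \<circ> g) S $ i = 0\<^sub>v n $ i" using i by simp
    qed
    then have "l (g u) = 0" if "u \<in> S" for u
      using S_indpt lin_dep_crit[OF S_fin subset_refl _ that, of "l \<circ> g"] by (auto simp: Pi_def)
    then show "\<forall>a\<in>g ` S. l a = 0" by blast
  qed
  moreover have "card (g ` S) = rank X" unfolding rank using inj card_image by blast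
  moreover have "g ` S \<subseteq> {..<nc}" using g by auto
  ultimately show ?thesis by blast
qed

definition qform :: "'i set \<Rightarrow> ('i \<Rightarrow> 'i \<Rightarrow> complex) \<Rightarrow> ('i \<Rightarrow> complex) \<Rightarrow> complex" where
  "qform I A w = (\<Sum>i\<in>I. \<Sum>j\<in>I. cnj (w i) * A i j * w j)"

lemma qform_add_scaled: "qform I (\<lambda>i j. A i j + c * D i j) w = qform I A w + c * qform I D w"
  unfolding qform_def by (simp add: sum.distrib sum_distrib_left algebra_simps)

lemma qform_norm_le:
  assumes I: "finite I"
  shows "cmod (qform I A w) \<le> (\<Sum>i\<in>I. \<Sum>j\<in>I. cmod (A i j)) * (\<Sum>i\<in>I. (cmod (w i))\<^sup>2)"
proof -
  define W where "W = (\<Sum>i\<in>I. (cmod (w i))\<^sup>2)"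
  have sq: "(cmod (w i))\<^sup>2 \<le> W" if "i \<in> I" for i
    unfolding W_def by (rule member_le_sum[OF that _ I]) simp
  have prod: "cmod (w i) * cmod (w j) \<le> W" if "i \<in> I" "j \<in> I" for i j
  proof -
    have "2 * (cmod (w i) * cmod (w j)) \<le> (cmod (w i))\<^sup>2 + (cmod (w j))\<^sup>2"
      using sum_squares_bound[of "cmod (w i)" "cmod (w j)"] by (simp add: power2_eq_square)
    then show ?thesis using sq[OF that(1)] sq[OF that(2)] by simp
  qed
  have "cmod (qform I A w) \<le> (\<Sum>i\<in>I. \<Sum>j\<in>I. cmod (cnj (w i) * A i j * w j))"
    unfolding qform_def by (rule order_trans[OF norm_sum sum_mono[OF norm_sum]])
  also have "\<dots> = (\<Sum>i\<in>I. \<Sum>j\<in>I. cmod (A i j) * (cmod (w i) * cmod (w j)))"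
    by (simp add: norm_mult mult_ac)
  also have "\<dots> \<le> (\<Sum>i\<in>I. \<Sum>j\<in>I. cmod (A i j) * W)"
    using prod by (intro sum_mono mult_left_mono) auto
  finally show ?thesis unfolding W_def by (simp add: sum_distrib_right)
qed

lemma qform_real_if_hermitian:
  assumes "\<forall>i\<in>I. \<forall>j\<in>I. A i j = cnj (A j i)"
  shows "Im (qform I A w) = 0"
proof -
  have "cnj (qform I A w) = (\<Sum>i\<in>I. \<Sum>j\<in>I. cnj (w j) * A j i * w i)"
    unfolding qform_def cnj_sum complex_cnj_mult complex_cnj_cnj
  proof (intro sum.cong refl)
    fix i j assume "i \<in> I" "j \<in> I"
    then have "cnj (A i j) = A j i" using assms by (metis complex_cnj_cnj)
    then show "w i * cnj (A i j) * cnj (w j) = cnj (w j) * A j i * w i" by (simp add: mult_ac)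
  qed
  also have "\<dots> = qform I A w" unfolding qform_def by (rule sum.swap)
  finally show ?thesis by (metis Reals_cnj_iff complex_is_Real_iff)
qed

lemma scalar_prod_mult_mat_vec_eq_qform:
  assumes A: "A \<in> carrier_mat n n" and v: "v \<in> carrier_vec n"
  shows "conjugate v \<bullet> (A *\<^sub>v v) = qform {..<n} (\<lambda>i j. A $$ (i, j)) (\<lambda>i. v $ i)"
proof -
  have "conjugate v \<bullet> (A *\<^sub>v v) = (\<Sum>i<n. cnj (v $ i) * (\<Sum>j<n. A $$ (i, j) * v $ j))"
    using A v by (simp add: scalar_prod_def atLeast0LessThan)
  then show ?thesis
    unfolding qform_def by (simp add: sum_distrib_left mult.assoc)
qed

lemma psd_mat_iff_qform:
  "psd_mat n A \<longleftrightarrow> A \<in> carrier_mat n n \<and> mat_adjoint A = A \<and>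
     (\<forall>w. Im (qform {..<n} (\<lambda>i j. A $$ (i, j)) w) = 0 \<and> Re (qform {..<n} (\<lambda>i j. A $$ (i, j)) w) \<ge> 0)"
proof -
  have "qform {..<n} (\<lambda>i j. A $$ (i, j)) w = conjugate (vec n w) \<bullet> (A *\<^sub>v vec n w)"
    if "A \<in> carrier_mat n n" for w
  proof -
    have "qform {..<n} (\<lambda>i j. A $$ (i, j)) w = qform {..<n} (\<lambda>i j. A $$ (i, j)) (\<lambda>i. vec n w $ i)"
      unfolding qform_def by (intro sum.cong) auto
    then show ?thesis using scalar_prod_mult_mat_vec_eq_qform[OF that, of "vec n w"] by simp
  qed
  then show ?thesis
    unfolding psd_mat_def using scalar_prod_mult_mat_vec_eq_qform by (metis vec_carrier)
qed

text \<open>The form is nonnegative at M v - X v, and expanding it leaves the claim.\<close>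
lemma psd_sum_norm_mult_le:
  assumes I: "finite I" and herm: "\<forall>i\<in>I. \<forall>j\<in>I. X i j = cnj (X j i)"
    and psd: "\<And>u. Re (qform I X u) \<ge> 0"
    and M: "(\<Sum>i\<in>I. \<Sum>j\<in>I. cmod (X i j)) \<le> M" and M_pos: "M > 0"
  shows "(\<Sum>i\<in>I. (cmod (\<Sum>j\<in>I. X i j * v j))\<^sup>2) \<le> M * Re (qform I X v)"
proof -
  define w where "w i = (\<Sum>j\<in>I. X i j * v j)" for i
  define W where "W = (\<Sum>i\<in>I. (cmod (w i))\<^sup>2)"
  define z where "z i = complex_of_real M * v i - w i" for i
  have cnj_w: "(\<Sum>i\<in>I. cnj (v i) * X i j) = cnj (w j)" if "j \<in> I" for j
  proof -
    have "cnj (w j) = (\<Sum>i\<in>I. cnj (X j i) * cnj (v i))" unfolding w_def by simp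
    also have "\<dots> = (\<Sum>i\<in>I. cnj (v i) * X i j)"
      using herm that by (intro sum.cong refl) (metis mult.commute)
    finally show ?thesis by simp
  qed
  have ww: "(\<Sum>i\<in>I. cnj (w i) * w i) = complex_of_real W"
    unfolding W_def of_real_sum
    by (intro sum.cong refl) (metis complex_norm_square mult.commute of_real_power)
  have vXw: "(\<Sum>i\<in>I. \<Sum>j\<in>I. cnj (v i) * X i j * w j) = complex_of_real W"
  proof -
    have "(\<Sum>i\<in>I. \<Sum>j\<in>I. cnj (v i) * X i j * w j) = (\<Sum>j\<in>I. (\<Sum>i\<in>I. cnj (v i) * X i j) * w j)"
      by (subst sum.swap) (simp add: sum_distrib_right)
    then show ?thesis using cnj_w ww by simp
  qed
  have wXv: "(\<Sum>i\<in>I. \<Sum>j\<in>I. cnj (w i) * X i j * v j) = complex_of_real W"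
    using ww unfolding w_def by (simp add: sum_distrib_left mult.assoc)
  have "qform I X z = complex_of_real (M * M) * qform I X v
      - complex_of_real M * (\<Sum>i\<in>I. \<Sum>j\<in>I. cnj (v i) * X i j * w j)
      - complex_of_real M * (\<Sum>i\<in>I. \<Sum>j\<in>I. cnj (w i) * X i j * v j) + qform I X w"
    unfolding qform_def z_def
    by (simp add: algebra_simps sum.distrib sum_subtractf sum_distrib_left)
  then have "Re (qform I X z) = M * M * Re (qform I X v) - 2 * M * W + Re (qform I X w)"
    unfolding vXw wXv by simp
  moreover have "Re (qform I X z) \<ge> 0" by (rule psd)
  moreover have "Re (qform I X w) \<le> M * W"
  proof -
    have "Re (qform I X w) \<le> (\<Sum>i\<in>I. \<Sum>j\<in>I. cmod (X i j)) * W"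
      using complex_Re_le_cmod qform_norm_le[OF I] unfolding W_def by (rule order_trans)
    also have "\<dots> \<le> M * W"
      using M unfolding W_def by (intro mult_right_mono) (auto intro: sum_nonneg)
    finally show ?thesis .
  qed
  ultimately have "M * W \<le> M * (M * Re (qform I X v))" by (simp add: algebra_simps)
  then have "W \<le> M * Re (qform I X v)" using M_pos by simp
  then show ?thesis unfolding W_def w_def .
qed

abbreviation blk_idx :: "(nat \<Rightarrow> nat) \<Rightarrow> (nat \<Rightarrow> nat) \<Rightarrow> nat \<Rightarrow> nat \<Rightarrow> nat \<Rightarrow> nat" where
  "blk_idx d m k i j \<equiv> blk_off d m k + i * m k + j"

lemma blk_idx_less_tot_dim:
  assumes "k < s" "i < d k" "j < m k"
  shows "blk_idx d m k i j < tot_dim s d m"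
proof -
  have "i * m k + j < Suc i * m k" using assms by simp
  also have "\<dots> \<le> d k * m k" using assms by (intro mult_le_mono1) simp
  finally have "blk_idx d m k i j < blk_off d m (Suc k)"
    unfolding blk_off_def by simp
  also have "blk_off d m (Suc k) \<le> tot_dim s d m"
    unfolding blk_off_def tot_dim_def using assms(1) by (intro sum_mono2) auto
  finally show ?thesis .
qed

lemma ptrace_blk_add:
  assumes "A \<in> carrier_mat (tot_dim s d m) (tot_dim s d m)"
    and "D \<in> carrier_mat (tot_dim s d m) (tot_dim s d m)" and "k < s"
  shows "ptrace_blk d m k (A + D) = ptrace_blk d m k A + ptrace_blk d m k D"
  using assms blk_idx_less_tot_dim[of k s _ d _ m]
  by (intro eq_matI) (auto simp: ptrace_blk_def sum.distrib)

lemma ptrace_blk_smult: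
  assumes "A \<in> carrier_mat (tot_dim s d m) (tot_dim s d m)" and "k < s"
  shows "ptrace_blk d m k (c \<cdot>\<^sub>m A) = c \<cdot>\<^sub>m ptrace_blk d m k A"
  using assms blk_idx_less_tot_dim[of k s _ d _ m]
  by (intro eq_matI) (auto simp: ptrace_blk_def sum_distrib_left)

lemma ptrace_blk_adjoint:
  assumes "A \<in> carrier_mat (tot_dim s d m) (tot_dim s d m)" and "k < s"
  shows "ptrace_blk d m k (mat_adjoint A) = mat_adjoint (ptrace_blk d m k A)"
  using assms blk_idx_less_tot_dim[of k s _ d _ m]
  by (intro eq_matI) (auto simp: ptrace_blk_def)

text \<open>For Hermitian X this is X_B F X_B^*, where X_B consists of the columns of X indexed by B.\<close>
definition sandwich_mat :: "nat \<Rightarrow> complex mat \<Rightarrow> nat set \<Rightarrow> (nat \<Rightarrow> nat \<Rightarrow> complex) \<Rightarrow> complex mat" where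
  "sandwich_mat n X B F = mat n n (\<lambda>(p, q). \<Sum>a\<in>B. \<Sum>b\<in>B. X $$ (p, a) * F a b * X $$ (b, q))"

lemma sandwich_mat_carrier [simp]: "sandwich_mat n X B F \<in> carrier_mat n n"
  unfolding sandwich_mat_def by simp

lemma sandwich_mat_lincomb:
  "sandwich_mat n X B (\<lambda>a b. \<alpha> * F a b + \<beta> * G a b) =
     \<alpha> \<cdot>\<^sub>m sandwich_mat n X B F + \<beta> \<cdot>\<^sub>m sandwich_mat n X B G"
  by (intro eq_matI) (auto simp: sandwich_mat_def sum.distrib sum_distrib_left algebra_simps)

lemma sandwich_mat_adjoint:
  assumes X: "X \<in> carrier_mat n n" "mat_adjoint X = X" and B: "B \<subseteq> {..<n}"
  shows "sandwich_mat n X B (\<lambda>a b. cnj (F b a)) = mat_adjoint (sandwich_mat n X B F)"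
proof (rule eq_matI)
  have herm: "\<forall>i<n. \<forall>j<n. X $$ (i, j) = cnj (X $$ (j, i))" using X mat_adjoint_eq_iff by blast
  fix p q assume "p < dim_row (mat_adjoint (sandwich_mat n X B F))"
    "q < dim_col (mat_adjoint (sandwich_mat n X B F))"
  then have pq: "p < n" "q < n" by (simp_all add: sandwich_mat_def)
  have "mat_adjoint (sandwich_mat n X B F) $$ (p, q) =
      (\<Sum>a\<in>B. \<Sum>b\<in>B. cnj (X $$ (q, a)) * cnj (F a b) * cnj (X $$ (b, p)))"
    using pq by (simp add: sandwich_mat_def)
  also have "\<dots> = (\<Sum>a\<in>B. \<Sum>b\<in>B. X $$ (p, b) * cnj (F a b) * X $$ (a, q))"
  proof (intro sum.cong refl)
    fix a b assume "a \<in> B" "b \<in> B"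
    then have "cnj (X $$ (q, a)) = X $$ (a, q)" "cnj (X $$ (b, p)) = X $$ (p, b)"
      using herm pq B by (metis complex_cnj_cnj lessThan_iff subsetD)+
    then show "cnj (X $$ (q, a)) * cnj (F a b) * cnj (X $$ (b, p)) = X $$ (p, b) * cnj (F a b) * X $$ (a, q)"
      by (simp add: mult_ac)
  qed
  also have "\<dots> = sandwich_mat n X B (\<lambda>a b. cnj (F b a)) $$ (p, q)"
    using pq sum.swap[of "\<lambda>a b. X $$ (p, b) * cnj (F a b) * X $$ (a, q)" B B]
    by (simp add: sandwich_mat_def)
  finally show "sandwich_mat n X B (\<lambda>a b. cnj (F b a)) $$ (p, q) = mat_adjoint (sandwich_mat n X B F) $$ (p, q)"
    by simp
qed (simp_all add: sandwich_mat_def)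

text \<open>Independence of the columns of X_B cancels X_B on both sides of X_B F X_B^* = 0.\<close>
lemma sandwich_mat_nonzero:
  assumes X: "X \<in> carrier_mat n n" "mat_adjoint X = X" and B: "B \<subseteq> {..<n}"
    and indpt: "lin_indpt_cols n X B"
    and nonzero: "a0 \<in> B" "b0 \<in> B" "F a0 b0 \<noteq> 0"
  shows "sandwich_mat n X B F \<noteq> 0\<^sub>m n n"
proof
  assume zero: "sandwich_mat n X B F = 0\<^sub>m n n"
  have herm: "\<forall>i<n. \<forall>j<n. X $$ (i, j) = cnj (X $$ (j, i))" using X mat_adjoint_eq_iff by blast
  have right: "(\<Sum>b\<in>B. F a b * X $$ (b, q)) = 0" if q: "q < n" and a: "a \<in> B" for q a
  proof -
    have "(\<Sum>a\<in>B. (\<Sum>b\<in>B. F a b * X $$ (b, q)) * X $$ (p, a)) = sandwich_mat n X B F $$ (p, q)"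
      if "p < n" for p
      using that q by (simp add: sandwich_mat_def sum_distrib_left sum_distrib_right mult_ac)
    then have "\<forall>p<n. (\<Sum>a\<in>B. (\<Sum>b\<in>B. F a b * X $$ (b, q)) * X $$ (p, a)) = 0"
      using zero q by simp
    then show ?thesis
      using indpt a unfolding lin_indpt_cols_def by (elim allE[of _ "\<lambda>a. \<Sum>b\<in>B. F a b * X $$ (b, q)"]) auto
  qed
  have "(\<Sum>b\<in>B. cnj (F a0 b) * X $$ (q, b)) = cnj (\<Sum>b\<in>B. F a0 b * X $$ (b, q))" if "q < n" for q
    using herm that B by (simp, intro sum.cong refl) (metis lessThan_iff subsetD)
  then have "\<forall>q<n. (\<Sum>b\<in>B. cnj (F a0 b) * X $$ (q, b)) = 0"
    using right nonzero(1) by simp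
  then have "cnj (F a0 b0) = 0"
    using indpt nonzero(2) unfolding lin_indpt_cols_def by (elim allE[of _ "\<lambda>b. cnj (F a0 b)"]) auto
  then show False using nonzero(3) by simp
qed

lemma qform_congruence:
  assumes "finite I" "finite J"
  shows "qform I (\<lambda>p q. \<Sum>a\<in>J. \<Sum>b\<in>J. L p a * F a b * cnj (L q b)) v =
    qform J F (\<lambda>a. \<Sum>p\<in>I. cnj (L p a) * v p)"
proof -
  have "qform I (\<lambda>p q. \<Sum>a\<in>J. \<Sum>b\<in>J. L p a * F a b * cnj (L q b)) v =
      (\<Sum>p\<in>I. \<Sum>q\<in>I. \<Sum>a\<in>J. \<Sum>b\<in>J. cnj (v p) * L p a * F a b * cnj (L q b) * v q)"
    unfolding qform_def by (simp add: sum_distrib_left sum_distrib_right mult.assoc)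
  also have "\<dots> = (\<Sum>p\<in>I. \<Sum>a\<in>J. \<Sum>q\<in>I. \<Sum>b\<in>J. cnj (v p) * L p a * F a b * cnj (L q b) * v q)"
    by (intro sum.cong refl) (rule sum.swap)
  also have "\<dots> = (\<Sum>a\<in>J. \<Sum>p\<in>I. \<Sum>b\<in>J. \<Sum>q\<in>I. cnj (v p) * L p a * F a b * cnj (L q b) * v q)"
    by (subst sum.swap) (intro sum.cong refl, rule sum.swap)
  also have "\<dots> = (\<Sum>a\<in>J. \<Sum>b\<in>J. \<Sum>p\<in>I. \<Sum>q\<in>I. cnj (v p) * L p a * F a b * cnj (L q b) * v q)"
    by (intro sum.cong refl) (rule sum.swap)
  also have "\<dots> = qform J F (\<lambda>a. \<Sum>p\<in>I. cnj (L p a) * v p)"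
    unfolding qform_def
    by (intro sum.cong refl, simp only: sum_distrib_right sum_product cnj_sum complex_cnj_mult
        complex_cnj_cnj) (simp add: mult_ac sum_distrib_left)
  finally show ?thesis .
qed

lemma qform_sandwich_mat:
  assumes X: "X \<in> carrier_mat n n" "mat_adjoint X = X" and B: "B \<subseteq> {..<n}"
  shows "qform {..<n} (\<lambda>p q. sandwich_mat n X B F $$ (p, q)) w =
    qform B F (\<lambda>a. \<Sum>q<n. X $$ (a, q) * w q)"
proof -
  have herm: "X $$ (b, q) = cnj (X $$ (q, b))" if "b \<in> B" "q < n" for b q
    using X mat_adjoint_eq_iff that B by blast
  have "qform {..<n} (\<lambda>p q. sandwich_mat n X B F $$ (p, q)) w =
      qform {..<n} (\<lambda>p q. \<Sum>a\<in>B. \<Sum>b\<in>B. X $$ (p, a) * F a b * cnj (X $$ (q, b))) w"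
    unfolding qform_def using herm by (intro sum.cong refl) (simp add: sandwich_mat_def)
  also have "\<dots> = qform B F (\<lambda>a. \<Sum>p<n. cnj (X $$ (p, a)) * w p)"
    using B finite_subset by (intro qform_congruence) auto
  also have "\<dots> = qform B F (\<lambda>a. \<Sum>q<n. X $$ (a, q) * w q)"
    unfolding qform_def using herm by (intro sum.cong refl) simp
  finally show ?thesis .
qed

lemma qform_sandwich_mat_le:
  assumes X: "psd_mat n X" and B: "B \<subseteq> {..<n}"
  shows "cmod (qform {..<n} (\<lambda>p q. sandwich_mat n X B F $$ (p, q)) w) \<le>
    (\<Sum>a\<in>B. \<Sum>b\<in>B. cmod (F a b)) * ((\<Sum>i<n. \<Sum>j<n. cmod (X $$ (i, j))) + 1) *
      Re (qform {..<n} (\<lambda>i j. X $$ (i, j)) w)"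
proof -
  define u where "u a = (\<Sum>q<n. X $$ (a, q) * w q)" for a
  have X_carrier: "X \<in> carrier_mat n n" and X_herm: "mat_adjoint X = X"
    and X_form: "\<And>w. Re (qform {..<n} (\<lambda>i j. X $$ (i, j)) w) \<ge> 0"
    using X unfolding psd_mat_iff_qform by auto
  have X_entries: "\<forall>i\<in>{..<n}. \<forall>j\<in>{..<n}. X $$ (i, j) = cnj (X $$ (j, i))"
    using mat_adjoint_eq_iff[OF X_carrier] X_herm by (metis lessThan_iff)
  have "cmod (qform {..<n} (\<lambda>p q. sandwich_mat n X B F $$ (p, q)) w) = cmod (qform B F u)"
    unfolding u_def using qform_sandwich_mat[OF X_carrier X_herm B] by simp
  also have "\<dots> \<le> (\<Sum>a\<in>B. \<Sum>b\<in>B. cmod (F a b)) * (\<Sum>a\<in>B. (cmod (u a))\<^sup>2)"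
    using B finite_subset by (intro qform_norm_le) auto
  also have "\<dots> \<le> (\<Sum>a\<in>B. \<Sum>b\<in>B. cmod (F a b)) * (\<Sum>a<n. (cmod (u a))\<^sup>2)"
    using B by (intro mult_left_mono sum_mono2 sum_nonneg) auto
  also have "\<dots> \<le> (\<Sum>a\<in>B. \<Sum>b\<in>B. cmod (F a b)) *
      (((\<Sum>i<n. \<Sum>j<n. cmod (X $$ (i, j))) + 1) * Re (qform {..<n} (\<lambda>i j. X $$ (i, j)) w))"
  proof (intro mult_left_mono sum_nonneg norm_ge_zero)
    show "(\<Sum>a<n. (cmod (u a))\<^sup>2) \<le>
        ((\<Sum>i<n. \<Sum>j<n. cmod (X $$ (i, j))) + 1) * Re (qform {..<n} (\<lambda>i j. X $$ (i, j)) w)"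
      unfolding u_def
      by (rule psd_sum_norm_mult_le[OF _ X_entries X_form]) (simp_all add: add_nonneg_pos sum_nonneg)
  qed
  finally show ?thesis by (simp add: mult.assoc)
qed

lemma psd_mat_add_dominated:
  assumes X: "psd_mat n X" and S: "S \<in> carrier_mat n n" "mat_adjoint S = S"
    and dominated: "\<And>w. \<epsilon> * cmod (qform {..<n} (\<lambda>i j. S $$ (i, j)) w) \<le>
      Re (qform {..<n} (\<lambda>i j. X $$ (i, j)) w)"
    and t: "\<bar>t\<bar> \<le> \<epsilon>"
  shows "psd_mat n (X + complex_of_real t \<cdot>\<^sub>m S)"
proof -
  have X_carrier: "X \<in> carrier_mat n n" and X_herm: "mat_adjoint X = X"
    and X_form: "\<And>w. Im (qform {..<n} (\<lambda>i j. X $$ (i, j)) w) = 0"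
    using X unfolding psd_mat_iff_qform by auto
  have entries: "(X + complex_of_real t \<cdot>\<^sub>m S) $$ (i, j) = X $$ (i, j) + complex_of_real t * S $$ (i, j)"
    if "i < n" "j < n" for i j
    using that X_carrier S by simp
  have carrier: "X + complex_of_real t \<cdot>\<^sub>m S \<in> carrier_mat n n" using X_carrier S by simp
  have "mat_adjoint (X + complex_of_real t \<cdot>\<^sub>m S) = X + complex_of_real t \<cdot>\<^sub>m S"
    unfolding mat_adjoint_eq_iff[OF carrier]
  proof (intro allI impI)
    fix i j assume ij: "i < n" "j < n"
    have "X $$ (i, j) = cnj (X $$ (j, i))" "S $$ (i, j) = cnj (S $$ (j, i))"
      using ij mat_adjoint_eq_iff[OF X_carrier, THEN iffD1, OF X_herm]
        mat_adjoint_eq_iff[OF S(1), THEN iffD1, OF S(2)] by blast+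
    then show "(X + complex_of_real t \<cdot>\<^sub>m S) $$ (i, j) = cnj ((X + complex_of_real t \<cdot>\<^sub>m S) $$ (j, i))"
      using ij by (simp add: entries)
  qed
  moreover have "Im (qform {..<n} (\<lambda>i j. (X + complex_of_real t \<cdot>\<^sub>m S) $$ (i, j)) w) = 0 \<and>
      Re (qform {..<n} (\<lambda>i j. (X + complex_of_real t \<cdot>\<^sub>m S) $$ (i, j)) w) \<ge> 0" for w
  proof -
    define qX where "qX = qform {..<n} (\<lambda>i j. X $$ (i, j)) w"
    define qS where "qS = qform {..<n} (\<lambda>i j. S $$ (i, j)) w"
    have "qform {..<n} (\<lambda>i j. (X + complex_of_real t \<cdot>\<^sub>m S) $$ (i, j)) w = qX + complex_of_real t * qS"
      unfolding qX_def qS_def qform_add_scaled[symmetric] unfolding qform_def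
      by (intro sum.cong refl) (simp add: entries)
    moreover have "\<forall>i\<in>{..<n}. \<forall>j\<in>{..<n}. S $$ (i, j) = cnj (S $$ (j, i))"
      using mat_adjoint_eq_iff[OF S(1)] S(2) by (metis lessThan_iff)
    then have "Im qS = 0" unfolding qS_def by (rule qform_real_if_hermitian)
    moreover have "\<bar>t * Re qS\<bar> \<le> \<epsilon> * cmod qS"
      using t by (simp add: abs_mult abs_Re_le_cmod mult_mono)
    ultimately show ?thesis
      using dominated[of w] X_form[of w] unfolding qX_def[symmetric] qS_def[symmetric]
      by (simp add: abs_le_iff)
  qed
  ultimately show ?thesis unfolding psd_mat_iff_qform using carrier by blast
qed

text \<open>The range of X_B F X_B^* lies in the range of X, hence a small multiple of it is dominated by X.\<close>
lemma psd_mat_add_sandwich: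
  assumes X: "psd_mat n X" and B: "B \<subseteq> {..<n}" and F: "\<forall>a b. F a b = cnj (F b a)"
  obtains \<epsilon> :: real where "\<epsilon> > 0"
    and "\<And>t. \<bar>t\<bar> \<le> \<epsilon> \<Longrightarrow> psd_mat n (X + complex_of_real t \<cdot>\<^sub>m sandwich_mat n X B F)"
proof -
  define M where "M = (\<Sum>a\<in>B. \<Sum>b\<in>B. cmod (F a b)) * ((\<Sum>i<n. \<Sum>j<n. cmod (X $$ (i, j))) + 1)"
  define \<epsilon> where "\<epsilon> = 1 / (M + 1)"
  have M: "M \<ge> 0" unfolding M_def by (intro mult_nonneg_nonneg sum_nonneg add_nonneg_nonneg) auto
  have X_carrier: "X \<in> carrier_mat n n" and X_herm: "mat_adjoint X = X"
    and X_form: "\<And>w. Re (qform {..<n} (\<lambda>i j. X $$ (i, j)) w) \<ge> 0"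
    using X unfolding psd_mat_iff_qform by auto
  have "(\<lambda>a b. cnj (F b a)) = F" using F by (intro ext) metis
  then have S_herm: "mat_adjoint (sandwich_mat n X B F) = sandwich_mat n X B F"
    using sandwich_mat_adjoint[OF X_carrier X_herm B, of F] by simp
  have "\<epsilon> * cmod (qform {..<n} (\<lambda>i j. sandwich_mat n X B F $$ (i, j)) w) \<le>
      Re (qform {..<n} (\<lambda>i j. X $$ (i, j)) w)" for w
  proof -
    have "\<epsilon> * cmod (qform {..<n} (\<lambda>i j. sandwich_mat n X B F $$ (i, j)) w) \<le>
        \<epsilon> * (M * Re (qform {..<n} (\<lambda>i j. X $$ (i, j)) w))"
      using qform_sandwich_mat_le[OF X B, of F w] M unfolding M_def \<epsilon>_def
      by (intro mult_left_mono) auto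
    also have "\<dots> \<le> Re (qform {..<n} (\<lambda>i j. X $$ (i, j)) w)"
      using M X_form[of w] unfolding \<epsilon>_def by (simp add: field_simps)
    finally show ?thesis .
  qed
  moreover have "\<epsilon> > 0" unfolding \<epsilon>_def using M by simp
  ultimately show ?thesis
    using that psd_mat_add_dominated[OF X sandwich_mat_carrier S_herm] by blast
qed

lemma extreme_point_mat_perturbation:
  assumes extreme: "extreme_point_mat X K" and "X \<in> carrier_mat n n" "D \<in> carrier_mat n n"
    and "c \<noteq> 0" "X + c \<cdot>\<^sub>m D \<in> K" "X + (- c) \<cdot>\<^sub>m D \<in> K"
  shows "D = 0\<^sub>m n n"
proof -
  have "X = complex_of_real (1 / 2) \<cdot>\<^sub>m (X + c \<cdot>\<^sub>m D) +
      complex_of_real (1 - 1 / 2) \<cdot>\<^sub>m (X + (- c) \<cdot>\<^sub>m D)"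
    using assms(2,3) by (intro eq_matI) (auto simp: algebra_simps)
  then have eq: "X + c \<cdot>\<^sub>m D = X + (- c) \<cdot>\<^sub>m D"
    using extreme assms(5,6) unfolding extreme_point_mat_def by (smt (verit) field_sum_of_halves)
  show ?thesis
  proof (rule eq_matI)
    fix i j assume "i < dim_row (0\<^sub>m n n)" "j < dim_col (0\<^sub>m n n)"
    then have "X $$ (i, j) + c * D $$ (i, j) = X $$ (i, j) + (- c) * D $$ (i, j)"
      using arg_cong[OF eq, of "\<lambda>A. A $$ (i, j)"] assms(2,3) by simp
    then show "D $$ (i, j) = 0\<^sub>m n n $$ (i, j)"
      using \<open>c \<noteq> 0\<close> \<open>i < dim_row (0\<^sub>m n n)\<close> \<open>j < dim_col (0\<^sub>m n n)\<close> by simp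
  qed (use assms(3) in auto)
qed

lemma setC_add_traceless:
  assumes X: "X \<in> setC s d m" and D: "D \<in> carrier_mat (tot_dim s d m) (tot_dim s d m)"
    and traceless: "\<forall>k<s. ptrace_blk d m k D = 0\<^sub>m (m k) (m k)"
    and psd: "psd_mat (tot_dim s d m) (X + D)"
  shows "X + D \<in> setC s d m"
proof -
  have X_carrier: "X \<in> carrier_mat (tot_dim s d m) (tot_dim s d m)"
    using X unfolding setC_def psd_mat_def by blast
  have "ptrace_blk d m k (X + D) = of_nat (d k) \<cdot>\<^sub>m 1\<^sub>m (m k)" if "k < s" for k
    using X traceless that unfolding ptrace_blk_add[OF X_carrier D that] setC_def by simp
  then show ?thesis using psd unfolding setC_def by blast
qed

lemma extreme_point_setC_traceless_perturbation:
  assumes extreme: "extreme_point_mat X (setC s d m)"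
    and D: "D \<in> carrier_mat (tot_dim s d m) (tot_dim s d m)"
    and traceless: "\<forall>k<s. ptrace_blk d m k D = 0\<^sub>m (m k) (m k)"
    and "\<epsilon> > 0" and psd: "\<And>t. \<bar>t\<bar> \<le> \<epsilon> \<Longrightarrow> psd_mat (tot_dim s d m) (X + complex_of_real t \<cdot>\<^sub>m D)"
  shows "D = 0\<^sub>m (tot_dim s d m) (tot_dim s d m)"
proof -
  have X_C: "X \<in> setC s d m" using extreme unfolding extreme_point_mat_def by blast
  then have X_carrier: "X \<in> carrier_mat (tot_dim s d m) (tot_dim s d m)"
    unfolding setC_def psd_mat_def by blast
  have perturbed: "X + complex_of_real t \<cdot>\<^sub>m D \<in> setC s d m" if "\<bar>t\<bar> \<le> \<epsilon>" for t
    using setC_add_traceless[OF X_C] psd[OF that] traceless ptrace_blk_smult[of _ s] D by simp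
  show ?thesis
  proof (rule extreme_point_mat_perturbation[OF extreme X_carrier D])
    show "X + complex_of_real \<epsilon> \<cdot>\<^sub>m D \<in> setC s d m"
      and "X + (- complex_of_real \<epsilon>) \<cdot>\<^sub>m D \<in> setC s d m"
      using perturbed[of \<epsilon>] perturbed[of "- \<epsilon>"] \<open>\<epsilon> > 0\<close> by simp_all
  qed (use \<open>\<epsilon> > 0\<close> in simp)
qed

lemma exists_hermitian_nonzero:
  assumes "P F" "F a b \<noteq> 0"
    and adjoint: "\<And>F. P F \<Longrightarrow> P (\<lambda>a b. cnj (F b a))"
    and lincomb: "\<And>F G \<alpha> \<beta>. P F \<Longrightarrow> P G \<Longrightarrow> P (\<lambda>a b. \<alpha> * F a b + \<beta> * G a b)"
  shows "\<exists>G. P G \<and> (\<forall>a b. G a b = cnj (G b a)) \<and> G a b \<noteq> 0"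
proof -
  define G1 where "G1 = (\<lambda>a b. 1 * F a b + 1 * cnj (F b a))"
  define G2 where "G2 = (\<lambda>a b. \<i> * F a b + (- \<i>) * cnj (F b a))"
  have "P G1" "P G2" unfolding G1_def G2_def using lincomb assms(1) adjoint by blast+
  moreover have "\<forall>a b. G1 a b = cnj (G1 b a)" "\<forall>a b. G2 a b = cnj (G2 b a)"
    unfolding G1_def G2_def by (simp_all add: algebra_simps)
  moreover have "G1 a b - \<i> * G2 a b = 2 * F a b"
    unfolding G1_def G2_def by (simp add: algebra_simps)
  then have "G1 a b \<noteq> 0 \<or> G2 a b \<noteq> 0" using assms(2) by auto
  ultimately show ?thesis by blast
qed

text \<open>The unknowns are the (card B)^2 entries of F, the equations the entries of the s partial traces.\<close>
lemma exists_traceless_sandwich: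
  assumes B: "finite B" and count: "(\<Sum>k<s. (m k)\<^sup>2) < (card B)\<^sup>2"
  shows "\<exists>F a b. a \<in> B \<and> b \<in> B \<and> F a b \<noteq> 0 \<and>
    (\<forall>k<s. ptrace_blk d m k (sandwich_mat (tot_dim s d m) X B F) = 0\<^sub>m (m k) (m k))"
proof -
  define E where "E = Sigma {..<s} (\<lambda>k. {..<m k} \<times> {..<m k})"
  define c where "c = (\<lambda>(k, j, j') (a, b).
    \<Sum>i<d k. X $$ (blk_idx d m k i j, a) * X $$ (b, blk_idx d m k i j'))"
  have "card E < card (B \<times> B)"
    using count unfolding E_def by (simp add: card_cartesian_product power2_eq_square)
  then obtain x where x_nonzero: "\<exists>q\<in>B \<times> B. x q \<noteq> 0"
    and x_sol: "\<forall>e\<in>E. (\<Sum>q\<in>B \<times> B. c e q * x q) = 0"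
    using underdetermined_system_nonzero_solution[of E "B \<times> B" c] B unfolding E_def by auto
  define F where "F a b = x (a, b)" for a b
  have "ptrace_blk d m k (sandwich_mat (tot_dim s d m) X B F) = 0\<^sub>m (m k) (m k)" if k: "k < s" for k
  proof (rule eq_matI)
    fix j j' assume "j < dim_row (0\<^sub>m (m k) (m k))" "j' < dim_col (0\<^sub>m (m k) (m k))"
    then have j: "j < m k" "j' < m k" by simp_all
    have "ptrace_blk d m k (sandwich_mat (tot_dim s d m) X B F) $$ (j, j') =
        (\<Sum>i<d k. \<Sum>a\<in>B. \<Sum>b\<in>B. X $$ (blk_idx d m k i j, a) * F a b * X $$ (b, blk_idx d m k i j'))"
      using j k blk_idx_less_tot_dim[of k s _ d _ m] by (simp add: ptrace_blk_def sandwich_mat_def)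
    also have "\<dots> = (\<Sum>a\<in>B. \<Sum>i<d k. \<Sum>b\<in>B. X $$ (blk_idx d m k i j, a) * F a b * X $$ (b, blk_idx d m k i j'))"
      by (rule sum.swap)
    also have "\<dots> = (\<Sum>a\<in>B. \<Sum>b\<in>B. \<Sum>i<d k. X $$ (blk_idx d m k i j, a) * F a b * X $$ (b, blk_idx d m k i j'))"
      by (rule sum.cong[OF refl], rule sum.swap)
    also have "\<dots> = (\<Sum>q\<in>B \<times> B. c (k, j, j') q * x q)"
      unfolding sum.cartesian_product' c_def F_def by (simp add: sum_distrib_left mult_ac)
    also have "\<dots> = 0" using x_sol k j unfolding E_def by blast
    finally show "ptrace_blk d m k (sandwich_mat (tot_dim s d m) X B F) $$ (j, j') = 0\<^sub>m (m k) (m k) $$ (j, j')"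
      using j by simp
  qed (simp_all add: ptrace_blk_def)
  moreover obtain a b where "a \<in> B" "b \<in> B" "F a b \<noteq> 0" using x_nonzero unfolding F_def by auto
  ultimately show ?thesis by blast
qed

lemma exists_traceless_hermitian_sandwich:
  assumes X: "X \<in> carrier_mat (tot_dim s d m) (tot_dim s d m)" "mat_adjoint X = X"
    and B: "B \<subseteq> {..<tot_dim s d m}" and count: "(\<Sum>k<s. (m k)\<^sup>2) < (card B)\<^sup>2"
  shows "\<exists>F a b. a \<in> B \<and> b \<in> B \<and> F a b \<noteq> 0 \<and> (\<forall>a b. F a b = cnj (F b a)) \<and>
    (\<forall>k<s. ptrace_blk d m k (sandwich_mat (tot_dim s d m) X B F) = 0\<^sub>m (m k) (m k))"
proof -
  let ?traceless = "\<lambda>F. \<forall>k<s. ptrace_blk d m k (sandwich_mat (tot_dim s d m) X B F) = 0\<^sub>m (m k) (m k)"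
  obtain F a b where F: "a \<in> B" "b \<in> B" "F a b \<noteq> 0" "?traceless F"
    using exists_traceless_sandwich[OF finite_subset[OF B] count] by blast
  have "?traceless (\<lambda>a b. cnj (F b a))" if "?traceless F" for F
    using that ptrace_blk_adjoint[OF sandwich_mat_carrier] mat_adjoint_eq_iff[OF zero_carrier_mat]
    unfolding sandwich_mat_adjoint[OF X B] by simp
  moreover have "?traceless (\<lambda>a b. \<alpha> * F a b + \<beta> * G a b)" if "?traceless F" "?traceless G" for F G \<alpha> \<beta>
    using that unfolding sandwich_mat_lincomb
    by (simp add: ptrace_blk_add[of _ s] ptrace_blk_smult[of _ s])
  ultimately show ?thesis using exists_hermitian_nonzero[of ?traceless F a b] F by blast
qed

theorem mainTheorem8:
  fixes s :: nat and d m :: "nat \<Rightarrow> nat" and X :: "complex mat"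
  assumes "\<forall>k<s. d k \<ge> 1" and "\<forall>k<s. m k \<ge> 1"
    and "extreme_point_mat X (setC s d m)"
  shows "(vec_space.rank (tot_dim s d m) X)\<^sup>2 \<le> (\<Sum>k<s. (m k)\<^sup>2)"
proof (rule ccontr)
  let ?n = "tot_dim s d m"
  assume "\<not> (vec_space.rank ?n X)\<^sup>2 \<le> (\<Sum>k<s. (m k)\<^sup>2)"
  then have count: "(\<Sum>k<s. (m k)\<^sup>2) < (vec_space.rank ?n X)\<^sup>2" by simp
  have X_psd: "psd_mat ?n X" using assms(3) unfolding extreme_point_mat_def setC_def by blast
  then have X_carrier: "X \<in> carrier_mat ?n ?n" and X_herm: "mat_adjoint X = X"
    unfolding psd_mat_def by auto
  obtain B where B: "B \<subseteq> {..<?n}" "card B = vec_space.rank ?n X" "lin_indpt_cols ?n X B"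
    using exists_lin_indpt_cols_card_rank[OF X_carrier] by blast
  obtain F a b where F: "a \<in> B" "b \<in> B" "F a b \<noteq> 0" "\<forall>a b. F a b = cnj (F b a)"
    and traceless: "\<forall>k<s. ptrace_blk d m k (sandwich_mat ?n X B F) = 0\<^sub>m (m k) (m k)"
    using exists_traceless_hermitian_sandwich[OF X_carrier X_herm B(1)] count unfolding B(2) by blast
  obtain \<epsilon> where "\<epsilon> > 0"
    and "\<And>t. \<bar>t\<bar> \<le> \<epsilon> \<Longrightarrow> psd_mat ?n (X + complex_of_real t \<cdot>\<^sub>m sandwich_mat ?n X B F)"
    using psd_mat_add_sandwich[OF X_psd B(1) F(4)] by blast
  then have "sandwich_mat ?n X B F = 0\<^sub>m ?n ?n"
    using extreme_point_setC_traceless_perturbation[OF assms(3) sandwich_mat_carrier traceless] by blast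
  moreover have "sandwich_mat ?n X B F \<noteq> 0\<^sub>m ?n ?n"
    by (rule sandwich_mat_nonzero[OF X_carrier X_herm B(1,3) F(1,2), of F, OF F(3)])
  ultimately show False by contradiction
qed

end
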